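(* Let $\mathbb{H}$ be a finite-dimensional complex Hilbert space and let $t\mapsto H(t)$ be a continuous family of self-adjoint operators on $\mathbb{H}$ with propagator $\{U(t,s)\}$ (unitaries with $U(t,t)=I$, $U(t,r)U(r,s)=U(t,s)$, $\mathrm{i}\frac{d}{dt}U(t,s)=H(t)U(t,s)$). Let $X_0=\sum_{j=1}^n\lambda_jE_j$ be self-adjoint with distinct eigenvalues $\lambda_j$ and spectral projections $E_j$, and suppose $T>0$ satisfies $U(0,T)E_jU(T,0)=E_j$ for all $j$. For each $j$ let $d_j=\dim E_j[\mathbb{H}]$, $\{\psi^{(j)}_k\}_{k=1}^{d_j}$ an orthonormal basis of $E_j[\mathbb{H}]$, $\psi^{(j)}_k(t)=U(0,t)\psi^{(j)}_k$, $\mathbb{H}_j(t)=U(0,t)E_jU(t,0)[\mathbb{H}]$, $C_j(t)=[\langle\psi^{(j)}_m,H(t)\psi^{(j)}_k\rangle]_{m,k}$, $\tilde V_j(t)=[\tilde v^{(j)}_{mk}(t)]$ the solution of $\mathrm{i}\frac{d}{dt}\tilde V_j=C_j\tilde V_j$, $\tilde V_j(0)=I_{d_j}$, $\tilde\psi^{(j)}_k(t)=\sum_m\tilde v^{(j)}_{mk}(t)\psi^{(j)}_m(t)$, and $G_j=[g^{(j)}_{mk}]_{m,k=1}^{d_j}$ with $g^{(j)}_{mk}=\langle\psi^{(j)}_m,\tilde\psi^{(j)}_k(T)\rangle$. Then for each $1\le j\le n$, $G_j$ is a $d_j\times d_j$ unitary matrix, and for any family $\{\bar\psi^{(j)}_k(t):1\le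 k\le d_j\}$, $t\in[0,T]$, such that for each $t$ it is an orthonormal basis of $\mathbb{H}_j(t)$, each $t\mapsto\bar\psi^{(j)}_k(t)$ is continuously differentiable on $[0,T]$, and $\bar\psi^{(j)}_k(T)=\bar\psi^{(j)}_k(0)=\psi^{(j)}_k$, one has $$G_j=I_{d_j}+\sum_{m=1}^\infty \mathrm{i}^m\int_0^T\int_0^{t_1}\cdots\int_0^{t_{m-1}}A_j(t_1)\cdots A_j(t_m)\,dt_m\cdots dt_1,$$ where $A_j(t)=[a^{(j)}_{mk}(t)]_{m,k=1}^{d_j}$ with $a^{(j)}_{mk}(t)=\mathrm{i}\langle\bar\psi^{(j)}_m(t),\frac{d}{dt}\bar\psi^{(j)}_k(t)\rangle$. In particular $G_j$ is independent of the Hamiltonian $H(t)$ and depends only on the loop of subspaces $[0,T]\ni t\mapsto\mathbb{H}_j(t)$.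
   Context: Inner products are linear in the second argument. $G_j$ is called the $j$-th non-Abelian observable-geometric phase of the cyclic observable evolution $X(t)=U(0,t)X_0U(t,0)$. *)

theory Defs
  imports "HOL-Analysis.Analysis"
begin

text \<open>The finite-dimensional complex Hilbert space is modelled as complex^'n
  (with 'n a finite index type); operators on it are matrices complex^'n^'n.
  The inner product is conjugate-linear in the first and linear in the second argument.\<close>

definition cinner :: "complex^'n \<Rightarrow> complex^'n \<Rightarrow> complex" where
  "cinner x y = (\<Sum>i\<in>UNIV. cnj (x$i) * y$i)"

definition adj :: "complex^'n^'n \<Rightarrow> complex^'n^'n" where
  "adj A = (\<chi> i j. cnj (A$j$i))"

definition cmat_scale :: "complex \<Rightarrow> complex^'n^'n \<Rightarrow> complex^'n^'n" where
  "cmat_scale c A = (\<chi> i j. c * A$i$j)"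

definition self_adjoint :: "complex^'n^'n \<Rightarrow> bool" where
  "self_adjoint A \<longleftrightarrow> adj A = A"

definition unitary_op :: "complex^'n^'n \<Rightarrow> bool" where
  "unitary_op U \<longleftrightarrow> adj U ** U = mat 1 \<and> U ** adj U = mat 1"

definition op_range :: "complex^'n^'n \<Rightarrow> (complex^'n) set" where
  "op_range M = range (\<lambda>x. M *v x)"

definition is_onb :: "nat \<Rightarrow> (nat \<Rightarrow> complex^'n) \<Rightarrow> (complex^'n) set \<Rightarrow> bool" where
  "is_onb d phi S \<longleftrightarrow>
     (\<forall>k<d. phi k \<in> S) \<and>
     (\<forall>m<d. \<forall>k<d. cinner (phi m) (phi k) = (if m = k then 1 else 0)) \<and>
     (\<forall>x\<in>S. \<exists>c. x = (\<Sum>k<d. c k *s phi k))"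

text \<open>d x d complex matrices are represented as functions nat => nat => complex
  (only the entries with indices < d matter).\<close>

definition unitary_sq :: "nat \<Rightarrow> (nat \<Rightarrow> nat \<Rightarrow> complex) \<Rightarrow> bool" where
  "unitary_sq d G \<longleftrightarrow>
     (\<forall>m<d. \<forall>k<d. (\<Sum>l<d. cnj (G l m) * G l k) = (if m = k then 1 else 0)) \<and>
     (\<forall>m<d. \<forall>k<d. (\<Sum>l<d. G m l * cnj (G k l)) = (if m = k then 1 else 0))"

text \<open>Iterated (time-ordered) integrals:
  dyson_iter A d 0 t = I, and
  dyson_iter A d (Suc m) t = int_0^t A(t1) * dyson_iter A d m t1 dt1, so that
  dyson_iter A d m T = int_0^T int_0^{t1} ... int_0^{t_{m-1}} A(t1)...A(tm) dtm ... dt1.\<close>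
fun dyson_iter :: "(real \<Rightarrow> nat \<Rightarrow> nat \<Rightarrow> complex) \<Rightarrow> nat \<Rightarrow> nat \<Rightarrow> real \<Rightarrow> nat \<Rightarrow> nat \<Rightarrow> complex" where
  "dyson_iter A d 0 t = (\<lambda>a b. if a = b then 1 else 0)"
| "dyson_iter A d (Suc m) t =
     (\<lambda>a b. integral {0..t} (\<lambda>t1. \<Sum>l<d. A t1 a l * dyson_iter A d m t1 l b))"

end

theory Submission
  imports Defs
begin

text \<open>The vectors \<open>\<psi>\<^sub>k(t)\<close> with a tilde are the parallel transport of the basis \<open>\<psi>\<^sub>k\<close> along the
  loop of subspaces \<open>\<bbbH>\<^sub>j(t)\<close>: because \<open>V\<^sub>j\<close> solves the Schroedinger equation compressed to
  \<open>E\<^sub>j\<close>, they stay orthonormal in \<open>\<bbbH>\<^sub>j(t)\<close> and their derivatives are orthogonal to \<open>\<bbbH>\<^sub>j(t)\<close>.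
  By cyclicity they end up as an orthonormal basis of \<open>\<bbbH>\<^sub>j(T) = E\<^sub>j[\<bbbH>]\<close>, so \<open>G\<^sub>j\<close>, their
  coefficient matrix in the basis \<open>\<psi>\<^sub>k\<close>, is unitary. For any closed frame \<open>\<psi>\<^sub>k(t)\<close> with a bar,
  the overlap matrix \<open>W(t)\<close> of the frame with the transported basis satisfies \<open>W' = \<i> A\<^sub>j W\<close>,
  \<open>W(0) = I\<close> and \<open>W(T) = G\<^sub>j\<close>; hence \<open>G\<^sub>j\<close> is the time-ordered exponential of \<open>\<i> A\<^sub>j\<close>, i.e. the
  sum of its Dyson series, whose convergence follows from the Picard estimate \<open>(d L t)\<^sup>N / N!\<close>.\<close>

section \<open>Inner products, adjoints and orthonormal bases\<close>

lemma norm_vec_le_sum_norm_nth: "norm (x::'a::real_normed_vector^'n) \<le> (\<Sum>i\<in>UNIV. norm (x$i))"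
  unfolding norm_vec_def by (rule L2_set_le_sum) auto

lemma bounded_bilinear_cinner: "bounded_bilinear (cinner :: complex^'n \<Rightarrow> complex^'n \<Rightarrow> complex)"
proof
  fix a a' b b' :: "complex^'n" and r :: real
  show "cinner (a + a') b = cinner a b + cinner a' b"
    by (simp add: cinner_def distrib_right sum.distrib)
  show "cinner a (b + b') = cinner a b + cinner a b'"
    by (simp add: cinner_def distrib_left sum.distrib)
  show "cinner (r *\<^sub>R a) b = r *\<^sub>R cinner a b"
    unfolding cinner_def vector_scaleR_component
    by (simp add: scaleR_conv_of_real sum_distrib_left mult.assoc)
  show "cinner a (r *\<^sub>R b) = r *\<^sub>R cinner a b"
    unfolding cinner_def vector_scaleR_component
    by (simp add: scaleR_conv_of_real sum_distrib_left algebra_simps)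
next
  show "\<exists>K. \<forall>a b. norm (cinner (a::complex^'n) b) \<le> norm a * norm b * K"
  proof (intro exI allI)
    fix a b :: "complex^'n"
    have "norm (cinner a b) \<le> (\<Sum>i\<in>UNIV. norm (cnj (a$i) * b$i))"
      unfolding cinner_def by (rule norm_sum)
    also have "\<dots> \<le> (\<Sum>i\<in>(UNIV::'n set). norm a * norm b)"
      by (intro sum_mono) (simp add: norm_mult mult_mono Finite_Cartesian_Product.norm_nth_le)
    finally show "norm (cinner a b) \<le> norm a * norm b * real CARD('n)"
      by (simp add: mult_ac)
  qed
qed

lemma bounded_bilinear_matrix_vector_mult:
  "bounded_bilinear (\<lambda>(M::complex^'n^'n) (x::complex^'n). M *v x)"
proof
  fix M M' :: "complex^'n^'n" and x x' :: "complex^'n" and r :: real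
  show "(M + M') *v x = M *v x + M' *v x"
    by (simp add: vec_eq_iff matrix_vector_mult_def distrib_right sum.distrib)
  show "M *v (x + x') = M *v x + M *v x'"
    by (simp add: vec_eq_iff matrix_vector_mult_def distrib_left sum.distrib)
  show "(r *\<^sub>R M) *v x = r *\<^sub>R (M *v x)"
    unfolding vec_eq_iff matrix_vector_mult_def vector_scaleR_component
    by (simp add: scaleR_conv_of_real sum_distrib_left mult.assoc)
  show "M *v (r *\<^sub>R x) = r *\<^sub>R (M *v x)"
    unfolding vec_eq_iff matrix_vector_mult_def vector_scaleR_component
    by (simp add: scaleR_conv_of_real sum_distrib_left algebra_simps)
next
  show "\<exists>K. \<forall>(M::complex^'n^'n) (x::complex^'n). norm (M *v x) \<le> norm M * norm x * K"
  proof (intro exI allI)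
    fix M :: "complex^'n^'n" and x :: "complex^'n"
    have entry: "norm (M$i$j) \<le> norm M" for i j
      using Finite_Cartesian_Product.norm_nth_le[of "M$i" j] Finite_Cartesian_Product.norm_nth_le[of M i] by linarith
    have "norm (M *v x) \<le> (\<Sum>i\<in>UNIV. norm ((M *v x)$i))"
      by (rule norm_vec_le_sum_norm_nth)
    also have "\<dots> \<le> (\<Sum>i\<in>(UNIV::'n set). \<Sum>j\<in>(UNIV::'n set). norm (M$i$j * x$j))"
      unfolding matrix_vector_mult_def by (intro sum_mono) (simp add: norm_sum)
    also have "\<dots> \<le> (\<Sum>i\<in>(UNIV::'n set). \<Sum>j\<in>(UNIV::'n set). norm M * norm x)"
      by (intro sum_mono) (simp add: norm_mult mult_mono entry Finite_Cartesian_Product.norm_nth_le)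
    finally show "norm (M *v x) \<le> norm M * norm x * (real CARD('n) * real CARD('n))"
      by (simp add: mult_ac)
  qed
qed

lemma bounded_bilinear_vector_scalar_mult:
  "bounded_bilinear (\<lambda>(c::complex) (x::complex^'n). c *s x)"
proof
  fix c c' :: complex and x x' :: "complex^'n" and r :: real
  show "(c + c') *s x = c *s x + c' *s x"
    by (rule vector_sadd_rdistrib)
  show "c *s (x + x') = c *s x + c *s x'"
    by (rule vector_add_ldistrib)
  show "(r *\<^sub>R c) *s x = r *\<^sub>R (c *s x)"
    unfolding vec_eq_iff vector_smult_component vector_scaleR_component
    by (simp add: scaleR_conv_of_real)
  show "c *s (r *\<^sub>R x) = r *\<^sub>R (c *s x)"
    unfolding vec_eq_iff vector_smult_component vector_scaleR_component
    by (simp add: scaleR_conv_of_real algebra_simps)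
next
  show "\<exists>K. \<forall>(c::complex) (x::complex^'n). norm (c *s x) \<le> norm c * norm x * K"
  proof (intro exI allI)
    fix c :: complex and x :: "complex^'n"
    have "norm (c *s x) \<le> (\<Sum>i\<in>UNIV. norm (c * x$i))"
      using norm_vec_le_sum_norm_nth[of "c *s x"] by simp
    also have "\<dots> \<le> (\<Sum>i\<in>(UNIV::'n set). norm c * norm x)"
      by (intro sum_mono) (simp add: norm_mult mult_left_mono Finite_Cartesian_Product.norm_nth_le)
    finally show "norm (c *s x) \<le> norm c * norm x * real CARD('n)"
      by (simp add: mult_ac)
  qed
qed

lemmas cinner_sum_right = bounded_bilinear.sum_right[OF bounded_bilinear_cinner]
lemmas cinner_add_left = bounded_bilinear.add_left[OF bounded_bilinear_cinner]
lemmas cinner_minus_left [simp] = bounded_bilinear.minus_left[OF bounded_bilinear_cinner]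
lemmas cinner_minus_right [simp] = bounded_bilinear.minus_right[OF bounded_bilinear_cinner]
lemmas matrix_vector_mult_sum_right = bounded_bilinear.sum_right[OF bounded_bilinear_matrix_vector_mult]

lemma has_vector_derivative_scalar_mult_const:
  assumes "(f has_vector_derivative f') (at t within S)"
  shows "((\<lambda>s. f s *s (v::complex^'n)) has_vector_derivative f' *s v) (at t within S)"
  using bounded_bilinear.has_vector_derivative[OF bounded_bilinear_vector_scalar_mult assms
      has_vector_derivative_const] by simp

lemma cinner_scaleC_right [simp]: "cinner x (c *s y) = c * cinner x y"
  by (simp add: cinner_def sum_distrib_left algebra_simps)

lemma cinner_scaleC_left [simp]: "cinner (c *s x) y = cnj c * cinner x y"
  by (simp add: cinner_def sum_distrib_left algebra_simps)

lemma cnj_cinner: "cnj (cinner x y) = cinner y x"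
  by (simp add: cinner_def mult.commute)

lemma cinner_adj_left: "cinner (M *v x) y = cinner x (adj M *v y)"
proof -
  have "cinner (M *v x) y = (\<Sum>i\<in>UNIV. \<Sum>j\<in>UNIV. cnj (M$i$j) * cnj (x$j) * y$i)"
    unfolding cinner_def matrix_vector_mult_def by (simp add: sum_distrib_right)
  also have "\<dots> = (\<Sum>j\<in>UNIV. \<Sum>i\<in>UNIV. cnj (M$i$j) * cnj (x$j) * y$i)"
    by (rule sum.swap)
  also have "\<dots> = cinner x (adj M *v y)"
    unfolding cinner_def matrix_vector_mult_def adj_def by (simp add: sum_distrib_left mult_ac)
  finally show ?thesis .
qed

lemma cinner_self_adjoint: "self_adjoint M \<Longrightarrow> cinner (M *v x) y = cinner x (M *v y)"
  by (simp add: cinner_adj_left self_adjoint_def)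

lemma cmat_scale_matrix_vector_mult: "cmat_scale c M *v x = c *s (M *v x)"
  by (simp add: vec_eq_iff matrix_vector_mult_def cmat_scale_def sum_distrib_left algebra_simps)

lemma op_rangeI: "x = M *v y \<Longrightarrow> x \<in> op_range M"
  unfolding op_range_def by auto

lemma op_range_idempotent_iff: "M ** M = M \<Longrightarrow> x \<in> op_range M \<longleftrightarrow> M *v x = x"
  unfolding op_range_def by (auto simp: matrix_vector_mul_assoc) (metis rangeI)

lemma is_onb_mem: "is_onb d \<phi> S \<Longrightarrow> k < d \<Longrightarrow> \<phi> k \<in> S"
  unfolding is_onb_def by blast

lemma is_onb_orthonormal:
  "is_onb d \<phi> S \<Longrightarrow> m < d \<Longrightarrow> k < d \<Longrightarrow> cinner (\<phi> m) (\<phi> k) = (if m = k then 1 else 0)"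
  unfolding is_onb_def by blast

lemma is_onb_coeff:
  assumes "is_onb d \<phi> S" "k < d"
  shows "cinner (\<phi> k) (\<Sum>l<d. c l *s \<phi> l) = c k"
proof -
  have "cinner (\<phi> k) (\<Sum>l<d. c l *s \<phi> l) = (\<Sum>l<d. c l * cinner (\<phi> k) (\<phi> l))"
    by (simp add: cinner_sum_right)
  also have "\<dots> = (\<Sum>l<d. if l = k then c l else 0)"
    using is_onb_orthonormal[OF assms(1) assms(2)] by (intro sum.cong) auto
  finally show ?thesis
    using assms(2) by simp
qed

lemma is_onb_expansion:
  assumes "is_onb d \<phi> S" "x \<in> S"
  shows "x = (\<Sum>k<d. cinner (\<phi> k) x *s \<phi> k)"
proof -
  obtain c where c: "x = (\<Sum>k<d. c k *s \<phi> k)"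
    using assms unfolding is_onb_def by blast
  moreover have "(\<Sum>k<d. cinner (\<phi> k) x *s \<phi> k) = (\<Sum>k<d. c k *s \<phi> k)"
    unfolding c using is_onb_coeff[OF assms(1)] by (intro sum.cong) auto
  ultimately show ?thesis
    by simp
qed

lemma is_onb_parseval:
  assumes "is_onb d \<phi> S" "x \<in> S"
  shows "cinner y x = (\<Sum>k<d. cinner y (\<phi> k) * cinner (\<phi> k) x)"
  by (subst is_onb_expansion[OF assms]) (simp add: cinner_sum_right mult.commute)

lemma projection_onb_expansion:
  assumes "E ** E = E" "self_adjoint E" "is_onb d \<phi> (op_range E)"
  shows "E *v x = (\<Sum>l<d. cinner (\<phi> l) x *s \<phi> l)"
proof -
  have "cinner (\<phi> l) (E *v x) = cinner (\<phi> l) x" if "l < d" for l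
    using is_onb_mem[OF assms(3) that] assms(1,2)
    by (simp add: cinner_self_adjoint[symmetric] op_range_idempotent_iff)
  moreover have "E *v x \<in> op_range E"
    by (rule op_rangeI) (rule refl)
  ultimately show ?thesis
    using is_onb_expansion[OF assms(3)] by (metis (no_types, lifting) lessThan_iff sum.cong)
qed

lemma hermitian_idempotent_eq_0_if_trace_0:
  fixes Q :: "nat \<Rightarrow> nat \<Rightarrow> complex"
  assumes idem: "\<And>i k. i < d \<Longrightarrow> k < d \<Longrightarrow> (\<Sum>l<d. Q i l * Q l k) = Q i k"
    and herm: "\<And>i k. cnj (Q i k) = Q k i"
    and trace: "(\<Sum>i<d. Q i i) = 0"
    and "i < d" "k < d"
  shows "Q i k = 0"
proof -
  have diag: "Q i i = of_real (\<Sum>l<d. (cmod (Q i l))\<^sup>2)" if "i < d" for i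
  proof -
    have "Q i i = (\<Sum>l<d. Q i l * cnj (Q i l))"
      using idem[OF that that] by (simp add: herm)
    then show ?thesis
      by (simp add: complex_norm_square del: of_real_power)
  qed
  have "of_real (\<Sum>i<d. \<Sum>l<d. (cmod (Q i l))\<^sup>2) = (0::complex)"
    using trace diag by simp
  then have "(\<Sum>i<d. \<Sum>l<d. (cmod (Q i l))\<^sup>2) = 0"
    by (simp only: of_real_eq_0_iff)
  then show ?thesis
    using assms(4,5) by (simp add: sum_nonneg_eq_0_iff sum_nonneg)
qed

text \<open>For square matrices a left inverse is a right inverse. With \<open>P = G G\<^sup>*\<close>, orthonormality of the
  columns makes \<open>I - P\<close> a Hermitian idempotent of trace \<open>d - d = 0\<close>, hence zero.\<close>

lemma unitary_sq_if_orthonormal_columns: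
  fixes G :: "nat \<Rightarrow> nat \<Rightarrow> complex"
  assumes col: "\<And>m k. m < d \<Longrightarrow> k < d \<Longrightarrow> (\<Sum>l<d. cnj (G l m) * G l k) = (if m = k then 1 else 0)"
  shows "unitary_sq d G"
proof -
  define P where "P i k = (\<Sum>a<d. G i a * cnj (G k a))" for i k
  define Q where "Q i k = (if i = k then 1 else 0) - P i k" for i k
  have P_idem: "(\<Sum>l<d. P i l * P l k) = P i k" for i k
  proof -
    have "(\<Sum>l<d. P i l * P l k) = (\<Sum>l<d. \<Sum>a<d. \<Sum>b<d. G i a * cnj (G k b) * (cnj (G l a) * G l b))"
      unfolding P_def sum_product by (simp add: mult_ac)
    also have "\<dots> = (\<Sum>a<d. \<Sum>b<d. \<Sum>l<d. G i a * cnj (G k b) * (cnj (G l a) * G l b))"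
      by (subst sum.swap) (rule sum.cong[OF refl], rule sum.swap)
    also have "\<dots> = (\<Sum>a<d. \<Sum>b<d. G i a * cnj (G k b) * (\<Sum>l<d. cnj (G l a) * G l b))"
      by (simp add: sum_distrib_left)
    also have "\<dots> = (\<Sum>a<d. \<Sum>b<d. if b = a then G i a * cnj (G k b) else 0)"
      using col by (intro sum.cong refl) auto
    finally show ?thesis
      unfolding P_def by simp
  qed
  have Q_idem: "(\<Sum>l<d. Q i l * Q l k) = Q i k" if "i < d" "k < d" for i k
  proof -
    have "Q i l * Q l k = ((if l = i then (if i = k then 1 else 0) else 0) - (if l = i then P l k else 0))
        - (if l = k then P i l else 0) + P i l * P l k" for l
      unfolding Q_def by (auto simp: algebra_simps)
    then show ?thesis
      using that unfolding Q_def by (simp add: sum.distrib sum_subtractf P_idem)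
  qed
  have Q_herm: "cnj (Q i k) = Q k i" for i k
    unfolding Q_def P_def by (simp add: mult.commute)
  have "(\<Sum>i<d. P i i) = (\<Sum>a<d. \<Sum>i<d. cnj (G i a) * G i a)"
    unfolding P_def by (subst sum.swap) (simp add: mult.commute)
  also have "\<dots> = of_nat d"
    using col by simp
  finally have Q_trace: "(\<Sum>i<d. Q i i) = 0"
    unfolding Q_def by (simp add: sum_subtractf)
  have "P m k = (if m = k then 1 else 0)" if "m < d" "k < d" for m k
    using hermitian_idempotent_eq_0_if_trace_0[OF Q_idem Q_herm Q_trace that] unfolding Q_def
    by (auto split: if_splits)
  then show ?thesis
    unfolding unitary_sq_def P_def using col by blast
qed

section \<open>Dyson series of a linear matrix equation\<close>

lemma integrable_on_initial_segment:
  fixes f :: "real \<Rightarrow> 'a::banach"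
  assumes "continuous_on {0..T} f" "t \<in> {0..T}"
  shows "f integrable_on {0..t}"
  using assms by (intro integrable_continuous_interval) (auto elim: continuous_on_subset)

lemma has_integral_power_Icc:
  assumes "0 \<le> t"
  shows "((\<lambda>s::real. s ^ N) has_integral t ^ Suc N / Suc N) {0..t}"
proof -
  have "((\<lambda>s. s ^ Suc N / Suc N) has_real_derivative x ^ N) (at x within {0..t})" for x :: real
    by (auto intro!: derivative_eq_intros simp del: power_Suc)
  then show ?thesis
    using fundamental_theorem_of_calculus[OF assms, of "\<lambda>s. s ^ Suc N / Suc N" "\<lambda>s. s ^ N"]
    by (simp add: has_real_derivative_iff_has_vector_derivative)
qed

lemma continuous_on_Icc_entries_bounded:
  fixes f :: "real \<Rightarrow> nat \<Rightarrow> nat \<Rightarrow> complex"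
  assumes "\<And>a b. a < d \<Longrightarrow> b < d \<Longrightarrow> continuous_on {0..T} (\<lambda>t. f t a b)"
  obtains B where "\<And>t a b. t \<in> {0..T} \<Longrightarrow> a < d \<Longrightarrow> b < d \<Longrightarrow> norm (f t a b) \<le> B"
proof -
  have "continuous_on {0..T} (\<lambda>t. \<Sum>a<d. \<Sum>b<d. norm (f t a b))"
    using assms by (intro continuous_intros) auto
  then obtain B where B: "\<And>t. t \<in> {0..T} \<Longrightarrow> norm (\<Sum>a<d. \<Sum>b<d. norm (f t a b)) \<le> B"
    by (rule continuous_on_compact_bound[OF compact_Icc]) blast
  have "norm (f t a b) \<le> B" if "t \<in> {0..T}" "a < d" "b < d" for t a b
  proof -
    have "norm (f t a b) \<le> (\<Sum>b'<d. norm (f t a b'))"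
      using that by (intro member_le_sum) auto
    also have "\<dots> \<le> (\<Sum>a'<d. \<Sum>b'<d. norm (f t a' b'))"
      using that by (intro member_le_sum[where f = "\<lambda>a'. \<Sum>b'<d. norm (f t a' b')"]) (auto intro: sum_nonneg)
    also have "\<dots> \<le> B"
      using B[OF that(1)] by simp
    finally show ?thesis .
  qed
  then show thesis
    by (rule that)
qed

lemma linear_ode_integral_equation:
  fixes A w :: "real \<Rightarrow> nat \<Rightarrow> nat \<Rightarrow> complex"
  assumes w_deriv: "\<And>a b t. a < d \<Longrightarrow> b < d \<Longrightarrow> t \<in> {0..T} \<Longrightarrow>
       ((\<lambda>s. w s a b) has_vector_derivative (\<Sum>l<d. \<i> * A t a l * w t l b)) (at t within {0..T})"
    and w_init: "w 0 a b = (if a = b then 1 else 0)"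
    and "t \<in> {0..T}" "a < d" "b < d"
  shows "w t a b = (if a = b then 1 else 0) + \<i> * integral {0..t} (\<lambda>s. \<Sum>l<d. A s a l * w s l b)"
proof -
  have "((\<lambda>s. \<Sum>l<d. \<i> * A s a l * w s l b) has_integral w t a b - w 0 a b) {0..t}"
    using assms(3-5) by (intro fundamental_theorem_of_calculus)
      (auto intro: has_vector_derivative_within_subset[OF w_deriv])
  then have "\<i> * integral {0..t} (\<lambda>s. \<Sum>l<d. A s a l * w s l b) = w t a b - w 0 a b"
    by (simp add: sum_distrib_left mult.assoc integral_unique flip: integral_mult_right)
  then show ?thesis
    using w_init by simp
qed

context
  fixes A :: "real \<Rightarrow> nat \<Rightarrow> nat \<Rightarrow> complex" and d :: nat and T :: real
  assumes A_continuous: "\<And>a b. a < d \<Longrightarrow> b < d \<Longrightarrow> continuous_on {0..T} (\<lambda>t. A t a b)"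
begin

lemma continuous_on_matrix_mult_left:
  assumes "\<And>a b. a < d \<Longrightarrow> b < d \<Longrightarrow> continuous_on {0..T} (\<lambda>t. f t a b)" "a < d" "b < d"
  shows "continuous_on {0..T} (\<lambda>t. \<Sum>l<d. A t a l * f t l b)"
  using assms by (intro continuous_intros A_continuous) auto

lemma dyson_iter_continuous_on:
  assumes "a < d" "b < d"
  shows "continuous_on {0..T} (\<lambda>t. dyson_iter A d m t a b)"
  using assms
proof (induction m arbitrary: a)
  case 0
  then show ?case by simp
next
  case (Suc m)
  then have "(\<lambda>s. \<Sum>l<d. A s a l * dyson_iter A d m s l b) integrable_on {0..T}"
    by (intro integrable_continuous_interval continuous_on_matrix_mult_left) auto
  then show ?case
    by (simp add: indefinite_integral_continuous_1)
qed

lemma dyson_partial_sum_Suc: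
  assumes "t \<in> {0..T}" "a < d" "b < d"
  shows "(\<Sum>m<Suc N. \<i> ^ m * dyson_iter A d m t a b)
    = (if a = b then 1 else 0)
      + \<i> * integral {0..t} (\<lambda>s. \<Sum>l<d. A s a l * (\<Sum>m<N. \<i> ^ m * dyson_iter A d m s l b))"
proof -
  have integrable: "(\<lambda>s. \<i> ^ m * (\<Sum>l<d. A s a l * dyson_iter A d m s l b)) integrable_on {0..t}" for m
    using assms
    by (intro integrable_on_initial_segment[where T = T] continuous_intros
        continuous_on_matrix_mult_left dyson_iter_continuous_on) auto
  have "(\<Sum>m<N. \<i> ^ Suc m * dyson_iter A d (Suc m) t a b)
      = (\<Sum>m<N. \<i> * integral {0..t} (\<lambda>s. \<i> ^ m * (\<Sum>l<d. A s a l * dyson_iter A d m s l b)))"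
    by (simp only: dyson_iter.simps power_Suc mult.assoc integral_mult_right)
  also have "\<dots> = \<i> * (\<Sum>m<N. integral {0..t} (\<lambda>s. \<i> ^ m * (\<Sum>l<d. A s a l * dyson_iter A d m s l b)))"
    by (rule sum_distrib_left[symmetric])
  also have "\<dots> = \<i> * integral {0..t} (\<lambda>s. \<Sum>m<N. \<i> ^ m * (\<Sum>l<d. A s a l * dyson_iter A d m s l b))"
    using integrable by (simp add: integral_sum)
  also have "(\<lambda>s. \<Sum>m<N. \<i> ^ m * (\<Sum>l<d. A s a l * dyson_iter A d m s l b))
      = (\<lambda>s. \<Sum>l<d. A s a l * (\<Sum>m<N. \<i> ^ m * dyson_iter A d m s l b))"
    by (auto simp: sum_distrib_left mult_ac intro: sum.swap)
  finally show ?thesis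
    by (subst sum.lessThan_Suc_shift) simp
qed

lemma picard_remainder_bound:
  fixes e :: "nat \<Rightarrow> real \<Rightarrow> nat \<Rightarrow> nat \<Rightarrow> complex" and K L :: real
  assumes step: "\<And>N t a b. t \<in> {0..T} \<Longrightarrow> a < d \<Longrightarrow> b < d \<Longrightarrow>
      e (Suc N) t a b = \<i> * integral {0..t} (\<lambda>s. \<Sum>l<d. A s a l * e N s l b)"
    and e_continuous: "\<And>N a b. a < d \<Longrightarrow> b < d \<Longrightarrow> continuous_on {0..T} (\<lambda>t. e N t a b)"
    and L: "\<And>t a b. t \<in> {0..T} \<Longrightarrow> a < d \<Longrightarrow> b < d \<Longrightarrow> norm (A t a b) \<le> L"
    and K: "\<And>t a b. t \<in> {0..T} \<Longrightarrow> a < d \<Longrightarrow> b < d \<Longrightarrow> norm (e 0 t a b) \<le> K"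
    and "t \<in> {0..T}" "a < d" "b < d"
  shows "norm (e N t a b) \<le> K * (real d * L) ^ N * t ^ N / fact N"
  using assms(5-7)
proof (induction N arbitrary: t a b)
  case 0
  then show ?case using K by simp
next
  case (Suc N)
  let ?c = "real d * L * (K * (real d * L) ^ N / fact N)"
  have "norm (e (Suc N) t a b) = norm (integral {0..t} (\<lambda>s. \<Sum>l<d. A s a l * e N s l b))"
    using step[OF Suc.prems] by (simp add: norm_mult)
  also have "\<dots> \<le> integral {0..t} (\<lambda>s. ?c * s ^ N)"
  proof (rule integral_norm_bound_integral)
    show "(\<lambda>s. \<Sum>l<d. A s a l * e N s l b) integrable_on {0..t}"
      using Suc.prems
      by (intro integrable_on_initial_segment[where T = T] continuous_on_matrix_mult_left e_continuous)
    show "(\<lambda>s. ?c * s ^ N) integrable_on {0..t}"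
      by (intro integrable_continuous_interval continuous_intros)
  next
    fix s assume "s \<in> {0..t}"
    then have s: "s \<in> {0..T}" using Suc.prems(1) by auto
    have "norm (\<Sum>l<d. A s a l * e N s l b) \<le> (\<Sum>l<d. norm (A s a l) * norm (e N s l b))"
      by (rule order_trans[OF norm_sum]) (simp add: norm_mult)
    also have "\<dots> \<le> (\<Sum>l<d. L * (K * (real d * L) ^ N * s ^ N / fact N))"
      using Suc.IH[OF s _ Suc.prems(3)] L[OF s Suc.prems(2)]
      by (intro sum_mono mult_mono) (auto intro: order_trans[OF norm_ge_zero])
    also have "\<dots> = ?c * s ^ N"
      by (simp add: algebra_simps)
    finally show "norm (\<Sum>l<d. A s a l * e N s l b) \<le> ?c * s ^ N" .
  qed
  also have "\<dots> = ?c * (t ^ Suc N / Suc N)"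
    using Suc.prems(1) by (simp add: integral_unique[OF has_integral_power_Icc])
  also have "\<dots> = K * (real d * L) ^ Suc N * t ^ Suc N / fact (Suc N)"
    by (simp add: field_simps)
  finally show ?case .
qed

lemma dyson_remainder_Suc:
  fixes w :: "real \<Rightarrow> nat \<Rightarrow> nat \<Rightarrow> complex"
  assumes w_continuous: "\<And>a b. a < d \<Longrightarrow> b < d \<Longrightarrow> continuous_on {0..T} (\<lambda>t. w t a b)"
    and w_integral: "w t a b = (if a = b then 1 else 0) + \<i> * integral {0..t} (\<lambda>s. \<Sum>l<d. A s a l * w s l b)"
    and t: "t \<in> {0..T}" and ab: "a < d" "b < d"
  shows "w t a b - (\<Sum>m<Suc N. \<i> ^ m * dyson_iter A d m t a b)
    = \<i> * integral {0..t} (\<lambda>s. \<Sum>l<d. A s a l * (w s l b - (\<Sum>m<N. \<i> ^ m * dyson_iter A d m s l b)))"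
proof -
  let ?S = "\<lambda>s l. \<Sum>m<N. \<i> ^ m * dyson_iter A d m s l b"
  have "(\<lambda>s. \<Sum>l<d. A s a l * (w s l b - ?S s l))
      = (\<lambda>s. (\<Sum>l<d. A s a l * w s l b) - (\<Sum>l<d. A s a l * ?S s l))"
    by (simp add: right_diff_distrib sum_subtractf)
  then have split: "integral {0..t} (\<lambda>s. \<Sum>l<d. A s a l * (w s l b - ?S s l))
      = integral {0..t} (\<lambda>s. \<Sum>l<d. A s a l * w s l b) - integral {0..t} (\<lambda>s. \<Sum>l<d. A s a l * ?S s l)"
    using t ab
    by (simp only:, intro integral_diff integrable_on_initial_segment[where T = T]
        continuous_on_matrix_mult_left w_continuous continuous_intros dyson_iter_continuous_on) auto
  show ?thesis
    unfolding dyson_partial_sum_Suc[OF t ab, of N] split using w_integral by (simp add: algebra_simps)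
qed

text \<open>The remainders \<open>W - (\<Sum>m<N. \<i>\<^sup>m D\<^sub>m)\<close> of the Dyson series obey the recursion of
  \<open>picard_remainder_bound\<close>, because \<open>W\<close> and the partial sums satisfy the same integral equation.\<close>

lemma dyson_series_sums:
  fixes w :: "real \<Rightarrow> nat \<Rightarrow> nat \<Rightarrow> complex"
  assumes T: "0 \<le> T"
    and w_deriv: "\<And>a b t. a < d \<Longrightarrow> b < d \<Longrightarrow> t \<in> {0..T} \<Longrightarrow>
       ((\<lambda>s. w s a b) has_vector_derivative (\<Sum>l<d. \<i> * A t a l * w t l b)) (at t within {0..T})"
    and w_init: "\<And>a b. a < d \<Longrightarrow> b < d \<Longrightarrow> w 0 a b = (if a = b then 1 else 0)"
    and "a < d" "b < d"
  shows "(\<lambda>m. \<i> ^ m * dyson_iter A d m T a b) sums w T a b"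
proof -
  define e where "e N t a b = w t a b - (\<Sum>m<N. \<i> ^ m * dyson_iter A d m t a b)" for N t a b
  have w_continuous: "continuous_on {0..T} (\<lambda>t. w t a b)" if "a < d" "b < d" for a b
    using w_deriv[OF that] has_vector_derivative_continuous by (blast intro: continuous_on_eq_continuous_within[THEN iffD2])
  have e_continuous: "continuous_on {0..T} (\<lambda>t. e N t a b)" if "a < d" "b < d" for N a b
    unfolding e_def using that by (intro continuous_intros w_continuous dyson_iter_continuous_on)
  have e_step: "e (Suc N) t a b = \<i> * integral {0..t} (\<lambda>s. \<Sum>l<d. A s a l * e N s l b)"
    if "t \<in> {0..T}" "a < d" "b < d" for N t a b
    unfolding e_def using that
    by (intro dyson_remainder_Suc w_continuous linear_ode_integral_equation[OF w_deriv w_init]) auto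
  obtain K where K: "\<And>t a b. t \<in> {0..T} \<Longrightarrow> a < d \<Longrightarrow> b < d \<Longrightarrow> norm (w t a b) \<le> K"
    using continuous_on_Icc_entries_bounded[of d T w] w_continuous by blast
  obtain L where L: "\<And>t a b. t \<in> {0..T} \<Longrightarrow> a < d \<Longrightarrow> b < d \<Longrightarrow> norm (A t a b) \<le> L"
    using continuous_on_Icc_entries_bounded[of d T A] A_continuous by blast
  have "norm (e N T a b) \<le> K * (real d * L) ^ N * T ^ N / fact N" for N
    using T assms(4,5) by (intro picard_remainder_bound[where e = e, OF e_step e_continuous L]) (auto simp: e_def K)
  then have bound: "norm (e N T a b) \<le> K * ((real d * L * T) ^ N /\<^sub>R fact N)" for N
    by (simp add: power_mult_distrib divide_inverse mult_ac)
  have "(\<lambda>N. K * ((real d * L * T) ^ N /\<^sub>R fact N)) \<longlonglongrightarrow> 0"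
    by (intro tendsto_mult_right_zero summable_LIMSEQ_zero[OF summable_exp_generic])
  then have "(\<lambda>N. e N T a b) \<longlonglongrightarrow> 0"
    by (rule Lim_null_comparison[OF always_eventually[OF allI[OF bound]]])
  then have "(\<lambda>N. - e N T a b) \<longlonglongrightarrow> 0"
    using tendsto_minus by fastforce
  then have "(\<lambda>N. (\<Sum>m<N. \<i> ^ m * dyson_iter A d m T a b) - w T a b) \<longlonglongrightarrow> 0"
    by (simp add: e_def)
  then show ?thesis
    unfolding sums_def by (rule LIM_zero_cancel)
qed

end

section \<open>Parallel transport along the cyclic evolution\<close>

locale propagator =
  fixes H :: "real \<Rightarrow> complex^'n^'n" and U :: "real \<Rightarrow> real \<Rightarrow> complex^'n^'n"
  assumes H_self_adjoint: "self_adjoint (H t)"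
    and U_unitary: "unitary_op (U t s)"
    and U_refl: "U t t = mat 1"
    and U_trans: "U t r ** U r s = U t s"
    and U_differentiable: "(\<lambda>\<tau>. U \<tau> s) differentiable (at t)"
    and U_schroedinger: "cmat_scale \<i> (vector_derivative (\<lambda>\<tau>. U \<tau> s) (at t)) = H t ** U t s"
begin

lemma U_inverse: "U s t ** U t s = mat 1"
  using U_trans U_refl by metis

lemma U_cancel [simp]: "U s t *v (U t s *v x) = x"
  by (simp add: matrix_vector_mul_assoc U_inverse)

lemma adj_U: "adj (U s t) = U t s"
proof -
  have "adj (U s t) = adj (U s t) ** (U s t ** U t s)"
    by (simp add: U_inverse matrix_mul_rid)
  also have "\<dots> = (adj (U s t) ** U s t) ** U t s"
    by (simp add: matrix_mul_assoc)
  finally show ?thesis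
    using U_unitary unfolding unitary_op_def by (simp add: matrix_mul_lid)
qed

lemma cinner_U_right: "cinner x (U s t *v y) = cinner (U t s *v x) y"
  by (simp add: cinner_adj_left adj_U)

lemma U_has_vector_derivative:
  "((\<lambda>\<tau>. U \<tau> s) has_vector_derivative cmat_scale (- \<i>) (H t ** U t s)) (at t)"
proof -
  have "cmat_scale (- \<i>) (H t ** U t s) = vector_derivative (\<lambda>\<tau>. U \<tau> s) (at t)"
    unfolding U_schroedinger[symmetric] by (simp add: cmat_scale_def vec_eq_iff)
  then show ?thesis
    using U_differentiable vector_derivative_works by metis
qed

end

definition geometric_phase ::
    "(real \<Rightarrow> real \<Rightarrow> complex^'n^'n) \<Rightarrow> nat \<Rightarrow> (nat \<Rightarrow> complex^'n) \<Rightarrow> (real \<Rightarrow> nat \<Rightarrow> nat \<Rightarrow> complex)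
      \<Rightarrow> real \<Rightarrow> nat \<Rightarrow> nat \<Rightarrow> complex" where
  "geometric_phase U d psi V T = (\<lambda>a b. cinner (psi a) (\<Sum>l<d. V T l b *s (U 0 T *v psi l)))"

locale cyclic_eigenspace = propagator H U
  for H :: "real \<Rightarrow> complex^'n^'n" and U +
  fixes E :: "complex^'n^'n" and d :: nat and psi :: "nat \<Rightarrow> complex^'n"
    and V :: "real \<Rightarrow> nat \<Rightarrow> nat \<Rightarrow> complex" and T :: real
  assumes E_idem: "E ** E = E"
    and E_self_adjoint: "self_adjoint E"
    and psi_onb: "is_onb d psi (op_range E)"
    and T_pos: "0 < T"
    and cyclic: "U 0 T ** E ** U T 0 = E"
    and V_ode: "t \<in> {0..T} \<Longrightarrow> a < d \<Longrightarrow> b < d \<Longrightarrow>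
      \<exists>D. ((\<lambda>s. V s a b) has_vector_derivative D) (at t within {0..T}) \<and>
          \<i> * D = (\<Sum>l<d. cinner (psi a) (H t *v psi l) * V t l b)"
    and V_init: "a < d \<Longrightarrow> b < d \<Longrightarrow> V 0 a b = (if a = b then 1 else 0)"
begin

text \<open>\<open>transported t k\<close> is \<open>U(t,0)\<close> applied to the paper's vector \<open>\<psi>\<^sub>k(t)\<close> with a tilde,
  i.e. that vector pulled back to the fixed space \<open>op_range E\<close>.\<close>

definition transported :: "real \<Rightarrow> nat \<Rightarrow> complex^'n" where
  "transported t k = (\<Sum>l<d. V t l k *s psi l)"

abbreviation phase :: "nat \<Rightarrow> nat \<Rightarrow> complex" where
  "phase \<equiv> geometric_phase U d psi V T"

lemma phase_eq: "phase a b = cinner (psi a) (U 0 T *v transported T b)"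
  unfolding geometric_phase_def transported_def by (simp add: matrix_vector_mult_sum_right vector_scalar_commute)

lemma E_transported: "E *v transported t k = transported t k"
  unfolding transported_def using is_onb_mem[OF psi_onb] E_idem
  by (simp add: matrix_vector_mult_sum_right vector_scalar_commute op_range_idempotent_iff)

lemma transported_init:
  assumes "k < d"
  shows "transported 0 k = psi k"
proof -
  have "transported 0 k = (\<Sum>l<d. if l = k then psi l else 0)"
    unfolding transported_def using assms by (intro sum.cong) (auto simp: V_init)
  then show ?thesis
    using assms by simp
qed

lemma V_has_vector_derivative:
  assumes "t \<in> {0..T}" "a < d" "b < d"
  shows "((\<lambda>s. V s a b) has_vector_derivative
      - \<i> * (\<Sum>l<d. cinner (psi a) (H t *v psi l) * V t l b)) (at t within {0..T})"
proof -
  obtain D where "((\<lambda>s. V s a b) has_vector_derivative D) (at t within {0..T})"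
    and "\<i> * D = (\<Sum>l<d. cinner (psi a) (H t *v psi l) * V t l b)"
    using V_ode[OF assms] by blast
  moreover have "D = - \<i> * (\<i> * D)"
    by simp
  ultimately show ?thesis
    by simp
qed

text \<open>Since \<open>V\<close> solves the Schroedinger equation compressed to \<open>op_range E\<close>, the transported
  vectors move with \<open>-\<i> E H\<close>: undoing the pull-back, the derivative of the tilde vectors is
  orthogonal to the moving subspace (parallel transport).\<close>

lemma transported_has_vector_derivative:
  assumes "t \<in> {0..T}" "k < d"
  shows "((\<lambda>s. transported s k) has_vector_derivative (- \<i>) *s (E *v (H t *v transported t k)))
    (at t within {0..T})"
proof -
  let ?C = "\<lambda>l. cinner (psi l) (H t *v transported t k)"
  have "?C l = (\<Sum>r<d. cinner (psi l) (H t *v psi r) * V t r k)" for l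
    unfolding transported_def
    by (simp add: matrix_vector_mult_sum_right vector_scalar_commute cinner_sum_right mult.commute)
  moreover have "((\<lambda>s. transported s k) has_vector_derivative
      (\<Sum>l<d. (- \<i> * (\<Sum>r<d. cinner (psi l) (H t *v psi r) * V t r k)) *s psi l)) (at t within {0..T})"
    unfolding transported_def using assms
    by (intro has_vector_derivative_sum has_vector_derivative_scalar_mult_const V_has_vector_derivative) auto
  ultimately have "((\<lambda>s. transported s k) has_vector_derivative (\<Sum>l<d. (- \<i> * ?C l) *s psi l))
      (at t within {0..T})"
    by simp
  moreover have "(- \<i>) *s (E *v (H t *v transported t k)) = (\<Sum>l<d. (- \<i> * ?C l) *s psi l)"
    unfolding projection_onb_expansion[OF E_idem E_self_adjoint psi_onb] sum_cmul[symmetric]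
    by (simp only: vector_smult_assoc)
  ultimately show ?thesis
    by simp
qed

lemma transported_orthonormal:
  assumes "t \<in> {0..T}" "a < d" "b < d"
  shows "cinner (transported t a) (transported t b) = (if a = b then 1 else 0)"
proof -
  have "((\<lambda>s. cinner (transported s a) (transported s b)) has_vector_derivative 0) (at s within {0..T})"
    if "s \<in> {0..T}" for s
  proof -
    let ?y = "transported s" and ?H = "H s"
    have E_moves: "cinner (?y a) (E *v (?H *v ?y b)) = cinner (?H *v ?y a) (?y b)"
      by (simp only: cinner_self_adjoint[OF E_self_adjoint, symmetric] E_transported
          cinner_self_adjoint[OF H_self_adjoint])
    have E_moves': "cinner (E *v (?H *v ?y a)) (?y b) = cinner (?H *v ?y a) (?y b)"
      by (simp only: cinner_self_adjoint[OF E_self_adjoint] E_transported)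
    have "((\<lambda>s. cinner (transported s a) (transported s b)) has_vector_derivative
        cinner (?y a) ((- \<i>) *s (E *v (?H *v ?y b))) + cinner ((- \<i>) *s (E *v (?H *v ?y a))) (?y b))
        (at s within {0..T})"
      by (rule bounded_bilinear.has_vector_derivative[OF bounded_bilinear_cinner
            transported_has_vector_derivative[OF that assms(2)] transported_has_vector_derivative[OF that assms(3)]])
    moreover have "cinner (?y a) ((- \<i>) *s (E *v (?H *v ?y b))) + cinner ((- \<i>) *s (E *v (?H *v ?y a))) (?y b) = 0"
      unfolding cinner_scaleC_left cinner_scaleC_right E_moves E_moves' by simp
    ultimately show ?thesis
      by simp
  qed
  then obtain c where c: "\<And>s. s \<in> {0..T} \<Longrightarrow> cinner (transported s a) (transported s b) = c"
    using has_vector_derivative_zero_constant[of "{0..T}" "\<lambda>s. cinner (transported s a) (transported s b)"]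
    by blast
  have "cinner (transported t a) (transported t b) = cinner (transported 0 a) (transported 0 b)"
    using c[OF assms(1)] c[of 0] T_pos by simp
  then show ?thesis
    using assms(2,3) by (simp add: transported_init is_onb_orthonormal[OF psi_onb])
qed

lemma transported_in_frame: "U 0 t *v transported t k \<in> op_range (U 0 t ** E ** U t 0)"
  by (rule op_rangeI[where y = "U 0 t *v transported t k"])
    (simp add: matrix_vector_mul_assoc[symmetric] E_transported)

lemma phase_unitary: "unitary_sq d phase"
proof (rule unitary_sq_if_orthonormal_columns)
  fix a b assume "a < d" "b < d"
  have in_range: "U 0 T *v transported T b \<in> op_range E"
    using transported_in_frame[of T b] by (simp add: cyclic)
  have "(\<Sum>l<d. cnj (phase l a) * phase l b)
      = (\<Sum>l<d. cinner (U 0 T *v transported T a) (psi l) * cinner (psi l) (U 0 T *v transported T b))"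
    by (simp add: phase_eq cnj_cinner)
  also have "\<dots> = cinner (U 0 T *v transported T a) (U 0 T *v transported T b)"
    by (rule is_onb_parseval[OF psi_onb in_range, symmetric])
  also have "\<dots> = (if a = b then 1 else 0)"
    using transported_orthonormal[of T a b] \<open>a < d\<close> \<open>b < d\<close> T_pos by (simp add: cinner_U_right)
  finally show "(\<Sum>l<d. cnj (phase l a) * phase l b) = (if a = b then 1 else 0)" .
qed

end

locale moving_frame = cyclic_eigenspace H U E d psi V T
  for H :: "real \<Rightarrow> complex^'n^'n" and U E d psi V T +
  fixes psibar :: "real \<Rightarrow> nat \<Rightarrow> complex^'n" and D :: "nat \<Rightarrow> real \<Rightarrow> complex^'n"
  assumes frame_onb: "t \<in> {0..T} \<Longrightarrow> is_onb d (psibar t) (op_range (U 0 t ** E ** U t 0))"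
    and frame_has_vector_derivative:
      "k < d \<Longrightarrow> t \<in> {0..T} \<Longrightarrow> ((\<lambda>s. psibar s k) has_vector_derivative D k t) (at t within {0..T})"
    and frame_derivative_continuous: "k < d \<Longrightarrow> continuous_on {0..T} (D k)"
    and frame_start: "k < d \<Longrightarrow> psibar 0 k = psi k"
    and frame_end: "k < d \<Longrightarrow> psibar T k = psi k"
begin

definition connection :: "real \<Rightarrow> nat \<Rightarrow> nat \<Rightarrow> complex" where
  "connection = (\<lambda>t a b. \<i> * cinner (psibar t a) (vector_derivative (\<lambda>s. psibar s b) (at t within {0..T})))"

definition overlap :: "real \<Rightarrow> nat \<Rightarrow> nat \<Rightarrow> complex" where
  "overlap t a b = cinner (psibar t a) (U 0 t *v transported t b)"

lemma vector_derivative_frame: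
  assumes "k < d" "t \<in> {0..T}"
  shows "vector_derivative (\<lambda>s. psibar s k) (at t within {0..T}) = D k t"
  using vector_derivative_within_closed_interval[OF T_pos] frame_has_vector_derivative assms by blast

lemma frame_continuous_on: "k < d \<Longrightarrow> continuous_on {0..T} (\<lambda>s. psibar s k)"
  unfolding continuous_on_eq_continuous_within
  using frame_has_vector_derivative has_vector_derivative_continuous by blast

lemma connection_continuous_on:
  assumes "a < d" "b < d"
  shows "continuous_on {0..T} (\<lambda>t. connection t a b)"
proof -
  have "continuous_on {0..T} (\<lambda>t. \<i> * cinner (psibar t a) (D b t))"
    using assms by (intro continuous_intros bounded_bilinear.continuous_on[OF bounded_bilinear_cinner]
        frame_continuous_on frame_derivative_continuous)
  then show ?thesis
    by (rule continuous_on_cong[THEN iffD1, rotated 2]) (auto simp: connection_def vector_derivative_frame assms)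
qed

lemma frame_derivative_skew:
  assumes "t \<in> {0..T}" "m < d" "k < d"
  shows "cinner (D m t) (psibar t k) = - cinner (psibar t m) (D k t)"
proof -
  have "((\<lambda>s. cinner (psibar s m) (psibar s k)) has_vector_derivative
      cinner (psibar t m) (D k t) + cinner (D m t) (psibar t k)) (at t within {0..T})"
    using assms
    by (intro bounded_bilinear.has_vector_derivative[OF bounded_bilinear_cinner] frame_has_vector_derivative)
  moreover have "((\<lambda>s. cinner (psibar s m) (psibar s k)) has_vector_derivative 0) (at t within {0..T})"
    using assms is_onb_orthonormal[OF frame_onb]
    by (intro has_vector_derivative_transform[OF assms(1) _ has_vector_derivative_const[of "if m = k then 1 else 0"]])
      auto
  ultimately have "cinner (psibar t m) (D k t) + cinner (D m t) (psibar t k) = 0"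
    using vector_derivative_unique_within_closed_interval[OF T_pos] assms(1) by (auto simp: cbox_interval)
  then show ?thesis
    by (simp add: add_eq_0_iff)
qed

lemma E_pullback_frame:
  assumes "t \<in> {0..T}" "p < d"
  shows "E *v (U t 0 *v psibar t p) = U t 0 *v psibar t p"
proof -
  obtain x where "psibar t p = (U 0 t ** E ** U t 0) *v x"
    using is_onb_mem[OF frame_onb[OF assms(1)] assms(2)] unfolding op_range_def by blast
  then have "U t 0 *v psibar t p = E *v (U t 0 *v x)"
    by (simp add: matrix_vector_mul_assoc[symmetric])
  then show ?thesis
    by (metis E_idem matrix_vector_mul_assoc)
qed

text \<open>The Hamiltonian terms cancel because the transported vectors move orthogonally to the moving
  subspace; the remaining term is expanded in the frame, where \<open>frame_derivative_skew\<close> turns it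
  into the connection.\<close>

lemma overlap_has_vector_derivative:
  assumes t: "t \<in> {0..T}" and p: "p < d" and q: "q < d"
  shows "((\<lambda>s. overlap s p q) has_vector_derivative (\<Sum>l<d. \<i> * connection t p l * overlap t l q))
    (at t within {0..T})"
proof -
  let ?z = "U t 0 *v psibar t p" and ?y = "transported t q"
  let ?z' = "U t 0 *v D p t + cmat_scale (- \<i>) (H t ** U t 0) *v psibar t p"
  have overlap_eq: "overlap s p q = cinner (U s 0 *v psibar s p) (transported s q)" for s
    by (simp add: overlap_def cinner_U_right)
  have "((\<lambda>s. U s 0 *v psibar s p) has_vector_derivative ?z') (at t within {0..T})"
    using bounded_bilinear.has_vector_derivative[OF bounded_bilinear_matrix_vector_mult
        has_vector_derivative_at_within[OF U_has_vector_derivative] frame_has_vector_derivative[OF p t]]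
    by simp
  then have "((\<lambda>s. overlap s p q) has_vector_derivative
      cinner ?z ((- \<i>) *s (E *v (H t *v ?y))) + cinner ?z' ?y) (at t within {0..T})"
    unfolding overlap_eq
    by (rule bounded_bilinear.has_vector_derivative[OF bounded_bilinear_cinner _
          transported_has_vector_derivative[OF t q]])
  moreover have "cinner ?z ((- \<i>) *s (E *v (H t *v ?y))) + cinner ?z' ?y = cinner (D p t) (U 0 t *v ?y)"
  proof -
    have "cinner ?z (E *v (H t *v ?y)) = cinner ?z (H t *v ?y)"
      by (simp only: cinner_self_adjoint[OF E_self_adjoint, symmetric] E_pullback_frame[OF t p])
    moreover have "cinner (cmat_scale (- \<i>) (H t ** U t 0) *v psibar t p) ?y = \<i> * cinner ?z (H t *v ?y)"
      by (simp add: cmat_scale_matrix_vector_mult matrix_vector_mul_assoc[symmetric]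
          cinner_self_adjoint[OF H_self_adjoint])
    ultimately show ?thesis
      by (simp add: cinner_add_left cinner_U_right)
  qed
  moreover have "cinner (D p t) (U 0 t *v ?y) = (\<Sum>l<d. \<i> * connection t p l * overlap t l q)"
  proof -
    have "cinner (D p t) (U 0 t *v ?y) = (\<Sum>l<d. cinner (D p t) (psibar t l) * overlap t l q)"
      unfolding overlap_def by (rule is_onb_parseval[OF frame_onb[OF t] transported_in_frame])
    also have "\<dots> = (\<Sum>l<d. \<i> * connection t p l * overlap t l q)"
      using t p by (intro sum.cong refl) (simp add: connection_def vector_derivative_frame frame_derivative_skew)
    finally show ?thesis .
  qed
  ultimately show ?thesis
    by simp
qed

lemma overlap_start: "a < d \<Longrightarrow> b < d \<Longrightarrow> overlap 0 a b = (if a = b then 1 else 0)"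
  by (simp add: overlap_def frame_start transported_init U_refl is_onb_orthonormal[OF psi_onb])

lemma overlap_end: "a < d \<Longrightarrow> overlap T a b = phase a b"
  by (simp add: overlap_def frame_end phase_eq)

lemma phase_dyson_series_of_frame:
  assumes "a < d" "b < d"
  shows "(\<lambda>m. \<i> ^ m * dyson_iter connection d m T a b) sums phase a b"
  using dyson_series_sums[where A = connection and w = overlap, OF connection_continuous_on _
      overlap_has_vector_derivative overlap_start assms] T_pos overlap_end[OF assms(1)]
  by simp

end

lemma (in cyclic_eigenspace) phase_dyson_series:
  fixes psibar :: "real \<Rightarrow> nat \<Rightarrow> complex^'n"
  assumes "\<forall>t\<in>{0..T}. is_onb d (psibar t) (op_range (U 0 t ** E ** U t 0))"
    and "\<forall>k<d. \<exists>D. (\<forall>t\<in>{0..T}. ((\<lambda>s. psibar s k) has_vector_derivative D t) (at t within {0..T}))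
                   \<and> continuous_on {0..T} D"
    and "\<forall>k<d. psibar T k = psi k \<and> psibar 0 k = psi k"
    and "a < d" "b < d"
  shows "(\<lambda>m. \<i> ^ m * dyson_iter (\<lambda>t a b. \<i> * cinner (psibar t a)
      (vector_derivative (\<lambda>s. psibar s b) (at t within {0..T}))) d m T a b) sums phase a b"
proof -
  obtain D where D: "\<forall>k<d. (\<forall>t\<in>{0..T}. ((\<lambda>s. psibar s k) has_vector_derivative D k t) (at t within {0..T}))
      \<and> continuous_on {0..T} (D k)"
    using assms(2) unfolding choice_iff' by blast
  interpret moving_frame H U E d psi V T psibar D
    using assms(1,3) D by unfold_locales auto
  show ?thesis
    using phase_dyson_series_of_frame[OF assms(4,5)] unfolding connection_def .
qed

theorem proposition2p3:
  fixes H :: "real \<Rightarrow> complex^'n^'n"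
    and U :: "real \<Rightarrow> real \<Rightarrow> complex^'n^'n"
    and X0 :: "complex^'n^'n"
    and n :: nat
    and lam :: "nat \<Rightarrow> real"
    and E :: "nat \<Rightarrow> complex^'n^'n"
    and T :: real
    and d :: "nat \<Rightarrow> nat"
    and psi :: "nat \<Rightarrow> nat \<Rightarrow> complex^'n"
    and V :: "nat \<Rightarrow> real \<Rightarrow> nat \<Rightarrow> nat \<Rightarrow> complex"
  assumes H_cont: "continuous_on UNIV H"
    and H_sa: "\<forall>t. self_adjoint (H t)"
    and U_unitary: "\<forall>t s. unitary_op (U t s)"
    and U_id: "\<forall>t. U t t = mat 1"
    and U_comp: "\<forall>t r s. U t r ** U r s = U t s"
    and U_deriv: "\<forall>t s. (\<lambda>\<tau>. U \<tau> s) differentiable (at t) \<and>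
                   cmat_scale \<i> (vector_derivative (\<lambda>\<tau>. U \<tau> s) (at t)) = H t ** U t s"
    and E_proj: "\<forall>j\<in>{1..n}. E j ** E j = E j \<and> self_adjoint (E j) \<and> E j \<noteq> 0"
    and E_orth: "\<forall>j\<in>{1..n}. \<forall>k\<in>{1..n}. j \<noteq> k \<longrightarrow> E j ** E k = 0"
    and E_sum: "(\<Sum>j=1..n. E j) = mat 1"
    and lam_distinct: "inj_on lam {1..n}"
    and X0_def: "X0 = (\<Sum>j=1..n. cmat_scale (complex_of_real (lam j)) (E j))"
    and T_pos: "T > 0"
    and cyclic: "\<forall>j\<in>{1..n}. U 0 T ** E j ** U T 0 = E j"
    and psi_onb: "\<forall>j\<in>{1..n}. is_onb (d j) (psi j) (op_range (E j))"
    and V_ode: "\<forall>j\<in>{1..n}. \<forall>t\<in>{0..T}. \<forall>a<d j. \<forall>b<d j.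
                  \<exists>D. ((\<lambda>s. V j s a b) has_vector_derivative D) (at t within {0..T}) \<and>
                      \<i> * D = (\<Sum>l<d j. cinner (psi j a) (H t *v psi j l) * V j t l b)"
    and V_init: "\<forall>j\<in>{1..n}. \<forall>a<d j. \<forall>b<d j. V j 0 a b = (if a = b then 1 else 0)"
  shows "\<forall>j\<in>{1..n}.
    (let G = (\<lambda>a b. cinner (psi j a) (\<Sum>l<d j. V j T l b *s (U 0 T *v psi j l))) in
      unitary_sq (d j) G \<and>
      (\<forall>psibar :: real \<Rightarrow> nat \<Rightarrow> complex^'n.
         (\<forall>t\<in>{0..T}. is_onb (d j) (psibar t) (op_range (U 0 t ** E j ** U t 0))) \<and>
         (\<forall>k<d j. \<exists>D. (\<forall>t\<in>{0..T}. ((\<lambda>s. psibar s k) has_vector_derivative D t) (at t within {0..T}))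
                        \<and> continuous_on {0..T} D) \<and>
         (\<forall>k<d j. psibar T k = psi j k \<and> psibar 0 k = psi j k)
         \<longrightarrow>
         (let A = (\<lambda>t a b. \<i> * cinner (psibar t a)
                     (vector_derivative (\<lambda>s. psibar s b) (at t within {0..T}))) in
          \<forall>a<d j. \<forall>b<d j. (\<lambda>m. \<i> ^ m * dyson_iter A (d j) m T a b) sums G a b)))"
proof -
  text \<open>Each eigenspace is treated on its own.\<close>
  have eigenspace: "cyclic_eigenspace H U (E j) (d j) (psi j) (V j) T" if "j \<in> {1..n}" for j
    using H_sa U_unitary U_id U_comp U_deriv E_proj psi_onb T_pos cyclic V_ode V_init that
    by unfold_locales auto
  show ?thesis
    unfolding Let_def
    using cyclic_eigenspace.phase_unitary[OF eigenspace] cyclic_eigenspace.phase_dyson_series[OF eigenspace]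
    unfolding geometric_phase_def by blast
qed

end
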